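(* Let $(x_n)_n$ and $(y_n)_n$ be bounded sequences in a Banach space $X$. (a) If $\sum_n\|x_n-y_n\|<\infty$, then $\{x_n\}_n$ is a Banach-Saks set if and only if $\{y_n\}_n$ is a Banach-Saks set. (b) $\mathrm{conv}(\{x_n\}_n)$ is a Banach-Saks set if and only if every block sequence in $\mathrm{conv}(\{x_n\}_n)$ has the Banach-Saks property (i.e. forms a Banach-Saks set).
   Context: A subset $A$ of a Banach space is a Banach-Saks set if every sequence in $A$ has a subsequence $(z_n)_n$ whose Ces\`aro means $\frac1n\sum_{k=1}^n z_k$ converge in norm. A block sequence in $\mathrm{conv}(\{x_n\}_n)$ is a sequence $(z_m)_m$ with $z_m=\sum_{k\in F_m}\lambda^{(m)}_k x_k$, where each $(\lambda^{(m)}_k)_{k\in F_m}$ is a convex combination and $F_1<F_2<\cdots$ are finite subsets of $\mathbb N$ ($F<G$ means $\max F<\min G$). *)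

theory Defs
  imports "HOL-Analysis.Analysis"
begin

definition cesaro_mean :: "(nat \<Rightarrow> 'a::real_normed_vector) \<Rightarrow> nat \<Rightarrow> 'a" where
  "cesaro_mean z n = (1 / real (Suc n)) *\<^sub>R (\<Sum>k\<le>n. z k)"

definition banach_saks_set :: "'a::real_normed_vector set \<Rightarrow> bool" where
  "banach_saks_set A \<longleftrightarrow>
     (\<forall>x::nat \<Rightarrow> 'a. (\<forall>n. x n \<in> A) \<longrightarrow>
        (\<exists>r::nat \<Rightarrow> nat. strict_mono r \<and> convergent (cesaro_mean (x \<circ> r))))"

definition block_seq_conv :: "(nat \<Rightarrow> 'a::real_normed_vector) \<Rightarrow> (nat \<Rightarrow> 'a) \<Rightarrow> bool" where
  "block_seq_conv x z \<longleftrightarrow>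
     (\<exists>F c. (\<forall>m. finite (F m) \<and> F m \<noteq> {} \<and> (\<forall>k\<in>F m. 0 \<le> c m k) \<and>
                 (\<Sum>k\<in>F m. c m k) = 1 \<and> z m = (\<Sum>k\<in>F m. c m k *\<^sub>R x k)) \<and>
            (\<forall>m. Max (F m) < Min (F (Suc m))))"

end

theory Submission
  imports Defs "HOL-Library.Diagonal_Subsequence"
begin

text \<open>
  Cesaro convergence is unaffected by perturbations tending to 0. For (a), a sequence in
  \<open>{x n}\<close> either takes one value infinitely often, giving a constant subsequence, or its
  indices tend to infinity, and then it is asymptotic to the corresponding sequence in \<open>{y n}\<close>.

  For (b), write a sequence in the convex hull as finitely supported convex combinations of the
  \<open>x k\<close>. A diagonal argument makes the coefficients converge pointwise to some \<open>\<mu>\<close>, and a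
  gliding hump selects rows whose heads are \<open>\<ell>\<^sup>1\<close>-close to \<open>\<mu>\<close> while their tails live on
  disjoint consecutive blocks. The selected vectors are then asymptotic to
  \<open>u + \<tau> z j\<close>, where \<open>u = \<Sum>k. \<mu> k x k\<close>, \<open>\<tau> = 1 - \<Sum>k. \<mu> k\<close> and \<open>z\<close> is a block
  sequence of convex combinations; a Banach-Saks subsequence of \<open>z\<close> gives one of the
  original sequence.
\<close>

lemma cesaro_mean_add: "cesaro_mean (\<lambda>k. f k + g k) n = cesaro_mean f n + cesaro_mean g n"
  by (simp add: cesaro_mean_def sum.distrib scaleR_right_distrib)

lemma cesaro_mean_scaleR: "cesaro_mean (\<lambda>k. c *\<^sub>R f k) n = c *\<^sub>R cesaro_mean f n"
  by (simp add: cesaro_mean_def scaleR_sum_right[symmetric])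

lemma cesaro_mean_const: "cesaro_mean (\<lambda>k. a) n = a"
  by (simp add: cesaro_mean_def sum_constant_scaleR del: of_nat_Suc)

lemma cesaro_mean_nonneg_null:
  fixes f :: "nat \<Rightarrow> real"
  assumes lim: "f \<longlonglongrightarrow> 0" and nonneg: "\<And>n. 0 \<le> f n"
  shows "cesaro_mean f \<longlonglongrightarrow> 0"
proof (rule LIMSEQ_I)
  fix e :: real assume e: "0 < e"
  obtain N where N: "\<And>n. n \<ge> N \<Longrightarrow> f n < e/2"
    using LIMSEQ_D[OF lim, of "e/2"] e by (force simp: abs_less_iff)
  define S where "S = (\<Sum>k<N. f k)"
  obtain M where M: "S / (e/2) < real M" using reals_Archimedean2 by blast
  show "\<exists>n0. \<forall>n\<ge>n0. norm (cesaro_mean f n - 0) < e"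
  proof (intro exI allI impI)
    fix n assume n: "N + M \<le> n"
    have split: "{..n} = {..<N} \<union> {N..n}" using n by auto
    have "(\<Sum>k\<le>n. f k) = S + (\<Sum>k\<in>{N..n}. f k)"
      unfolding split S_def by (rule sum.union_disjoint) auto
    moreover have "(\<Sum>k\<in>{N..n}. f k) \<le> real (Suc n) * (e/2)"
    proof -
      have "(\<Sum>k\<in>{N..n}. f k) \<le> (\<Sum>k\<in>{N..n}. e/2)" using N by (intro sum_mono) (auto intro: less_imp_le)
      also have "\<dots> \<le> real (Suc n) * (e/2)" using e by (simp add: mult_right_mono)
      finally show ?thesis .
    qed
    moreover have "S < real (Suc n) * (e/2)"
    proof -
      have "S < real M * (e/2)" using M e by (simp add: field_simps)
      also have "\<dots> \<le> real (Suc n) * (e/2)" using n e by (intro mult_right_mono) auto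
      finally show ?thesis .
    qed
    ultimately have "(\<Sum>k\<le>n. f k) < real (Suc n) * e" by simp
    moreover have "0 \<le> (\<Sum>k\<le>n. f k)" using nonneg by (simp add: sum_nonneg)
    ultimately show "norm (cesaro_mean f n - 0) < e"
      by (simp add: cesaro_mean_def field_simps)
  qed
qed

lemma norm_cesaro_mean_le: "norm (cesaro_mean z n) \<le> cesaro_mean (\<lambda>k. norm (z k)) n"
  by (simp add: cesaro_mean_def norm_sum divide_right_mono)

lemma cesaro_mean_tendsto:
  fixes z :: "nat \<Rightarrow> 'a::real_normed_vector"
  assumes "z \<longlonglongrightarrow> l"
  shows "cesaro_mean z \<longlonglongrightarrow> l"
proof -
  have "(\<lambda>k. norm (z k - l)) \<longlonglongrightarrow> 0"
    using assms by (simp add: tendsto_norm_zero_iff LIM_zero)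
  then have "cesaro_mean (\<lambda>k. norm (z k - l)) \<longlonglongrightarrow> 0"
    by (rule cesaro_mean_nonneg_null) simp
  then have "cesaro_mean (\<lambda>k. z k - l) \<longlonglongrightarrow> 0"
    by (rule Lim_null_comparison[OF always_eventually, OF allI, OF norm_cesaro_mean_le])
  moreover have "cesaro_mean (\<lambda>k. z k - l) = (\<lambda>n. cesaro_mean z n - l)"
    using cesaro_mean_add[of "\<lambda>k. z k - l" "\<lambda>k. l"] by (simp add: fun_eq_iff cesaro_mean_const)
  ultimately show ?thesis by (simp add: LIM_zero_iff)
qed

lemma convergent_cesaro_mean_perturb:
  fixes f g :: "nat \<Rightarrow> 'a::real_normed_vector"
  assumes "(\<lambda>k. f k - g k) \<longlonglongrightarrow> 0" and "convergent (cesaro_mean g)"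
  shows "convergent (cesaro_mean f)"
proof -
  from assms(2) obtain l where "cesaro_mean g \<longlonglongrightarrow> l" by (auto simp: convergent_def)
  from tendsto_add[OF this cesaro_mean_tendsto[OF assms(1)]]
  have "(\<lambda>n. cesaro_mean g n + cesaro_mean (\<lambda>k. f k - g k) n) \<longlonglongrightarrow> l + 0" .
  moreover have "(\<lambda>n. cesaro_mean g n + cesaro_mean (\<lambda>k. f k - g k) n) = cesaro_mean f"
    using cesaro_mean_add[of g "\<lambda>k. f k - g k"] by (simp add: fun_eq_iff)
  ultimately show ?thesis by (auto simp: convergent_def)
qed

lemma convergent_cesaro_mean_affine:
  assumes "convergent (cesaro_mean f)"
  shows "convergent (cesaro_mean (\<lambda>k. u + c *\<^sub>R f k))"
proof -
  from assms obtain l where "cesaro_mean f \<longlonglongrightarrow> l" by (auto simp: convergent_def)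
  then have "(\<lambda>n. u + c *\<^sub>R cesaro_mean f n) \<longlonglongrightarrow> u + c *\<^sub>R l" by (intro tendsto_intros)
  moreover have "(\<lambda>n. u + c *\<^sub>R cesaro_mean f n) = cesaro_mean (\<lambda>k. u + c *\<^sub>R f k)"
    by (simp add: fun_eq_iff cesaro_mean_add cesaro_mean_scaleR cesaro_mean_const)
  ultimately show ?thesis by (auto simp: convergent_def)
qed

lemma banach_saks_set_subset: "banach_saks_set B \<Longrightarrow> A \<subseteq> B \<Longrightarrow> banach_saks_set A"
  unfolding banach_saks_set_def by blast

lemma nat_seq_constant_subseq_or_tendsto_infinity:
  fixes \<sigma> :: "nat \<Rightarrow> nat"
  obtains c and r :: "nat \<Rightarrow> nat" where "strict_mono r" "\<And>k. \<sigma> (r k) = c"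
  | "filterlim \<sigma> at_top sequentially"
proof (cases "\<exists>c. infinite {n. \<sigma> n = c}")
  case True
  then obtain c where c: "infinite {n. \<sigma> n = c}" by blast
  show ?thesis
    by (rule that(1)[OF strict_mono_enumerate[OF c]]) (use enumerate_in_set[OF c] in auto)
next
  case False
  have "eventually (\<lambda>n. N \<le> \<sigma> n) sequentially" for N
  proof -
    have "{n. \<not> N \<le> \<sigma> n} = (\<Union>c<N. {n. \<sigma> n = c})" by auto
    then show ?thesis using False by (simp add: cofinite_eq_sequentially[symmetric] eventually_cofinite)
  qed
  then show ?thesis using that(2) by (simp add: filterlim_at_top)
qed

lemma banach_saks_set_range_if_asymptotic:
  fixes x y :: "nat \<Rightarrow> 'a::real_normed_vector"
  assumes xy: "(\<lambda>n. x n - y n) \<longlonglongrightarrow> 0" and bs: "banach_saks_set (range y)"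
  shows "banach_saks_set (range x)"
  unfolding banach_saks_set_def
proof (intro allI impI)
  fix v :: "nat \<Rightarrow> 'a" assume "\<forall>n. v n \<in> range x"
  then have "\<forall>n. \<exists>i. v n = x i" by auto
  then obtain \<sigma> where v: "\<And>n. v n = x (\<sigma> n)" by metis
  show "\<exists>r. strict_mono r \<and> convergent (cesaro_mean (v \<circ> r))"
  proof (rule nat_seq_constant_subseq_or_tendsto_infinity[of \<sigma>])
    fix c and r :: "nat \<Rightarrow> nat" assume "strict_mono r" "\<And>k. \<sigma> (r k) = c"
    then have "cesaro_mean (v \<circ> r) = (\<lambda>n. x c)"
      by (simp add: fun_eq_iff v o_def cesaro_mean_const)
    with \<open>strict_mono r\<close> show ?thesis by (auto simp: convergent_const)
  next
    assume divergent: "filterlim \<sigma> at_top sequentially"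
    obtain r where r: "strict_mono r" "convergent (cesaro_mean (y \<circ> \<sigma> \<circ> r))"
      using bs unfolding banach_saks_set_def by (metis comp_apply rangeI)
    have "filterlim (\<sigma> \<circ> r) at_top sequentially"
      using filterlim_compose[OF divergent filterlim_subseq[OF r(1)]] by (simp add: o_def)
    from filterlim_compose[OF xy this]
    have "(\<lambda>k. (v \<circ> r) k - (y \<circ> \<sigma> \<circ> r) k) \<longlonglongrightarrow> 0" by (simp add: v o_def)
    with r show ?thesis using convergent_cesaro_mean_perturb by blast
  qed
qed

lemma block_seq_conv_range_subset_convex_hull:
  assumes "block_seq_conv x z"
  shows "range z \<subseteq> convex hull (range x)"
proof -
  from assms obtain F c where Fc: "\<forall>m. finite (F m) \<and> F m \<noteq> {} \<and> (\<forall>k\<in>F m. 0 \<le> c m k) \<and>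
      (\<Sum>k\<in>F m. c m k) = 1 \<and> z m = (\<Sum>k\<in>F m. c m k *\<^sub>R x k)"
    unfolding block_seq_conv_def by blast
  show ?thesis
  proof clarify
    fix m
    show "z m \<in> convex hull (range x)"
      using Fc convex_sum[of "F m" "convex hull (range x)" "c m" x]
      by (auto intro: hull_subset[THEN subsetD])
  qed
qed

lemma convex_hull_range_nat_explicit:
  fixes x :: "nat \<Rightarrow> 'a::real_normed_vector"
  assumes "w \<in> convex hull (range x)"
  shows "\<exists>lam M. (\<forall>k. 0 \<le> lam k) \<and> (\<forall>k>M. lam k = 0) \<and> (\<Sum>k\<le>M. lam k) = 1
           \<and> w = (\<Sum>k\<le>M. lam k *\<^sub>R x k)"
proof -
  from assms obtain S u where S: "finite S" "S \<subseteq> range x" "\<forall>v\<in>S. 0 \<le> u v" "sum u S = 1"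
      "(\<Sum>v\<in>S. u v *\<^sub>R v) = w"
    unfolding convex_hull_explicit by blast
  define I where "I = inv x ` S"
  have x_inv: "x (inv x v) = v" if "v \<in> S" for v using S(2) that by (auto simp: f_inv_into_f)
  have inj: "inj_on x I" unfolding I_def inj_on_def using x_inv by auto
  have xI: "x ` I = S" unfolding I_def image_image using x_inv by simp
  define M where "M = Max I"
  have IM: "I \<subseteq> {..M}" using S(1) by (auto simp: M_def I_def)
  define lam where "lam k = (if k \<in> I then u (x k) else 0)" for k
  have "(\<Sum>k\<le>M. lam k) = (\<Sum>k\<in>I. u (x k))"
    using IM by (intro sum.mono_neutral_cong_right) (auto simp: lam_def)
  also have "\<dots> = 1" using sum.reindex[OF inj, of u] xI S(4) by simp
  finally have lam_sum: "(\<Sum>k\<le>M. lam k) = 1" .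
  have "(\<Sum>k\<le>M. lam k *\<^sub>R x k) = (\<Sum>k\<in>I. u (x k) *\<^sub>R x k)"
    using IM by (intro sum.mono_neutral_cong_right) (auto simp: lam_def)
  then have w_eq: "w = (\<Sum>k\<le>M. lam k *\<^sub>R x k)"
    using sum.reindex[OF inj, of "\<lambda>v. u v *\<^sub>R v"] xI S(5) by simp
  have "x k \<in> S" if "k \<in> I" for k using xI that by blast
  then have "\<forall>k. 0 \<le> lam k" using S(3) by (simp add: lam_def)
  moreover have "\<forall>k>M. lam k = 0" using IM by (auto simp: lam_def)
  ultimately show ?thesis using lam_sum w_eq by (intro exI[of _ lam] exI[of _ M]) simp
qed

lemma diagonal_subseq_pointwise_convergent:
  fixes L :: "nat \<Rightarrow> nat \<Rightarrow> 'a::heine_borel"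
  assumes "\<And>k. bounded (range (\<lambda>n. L n k))"
  obtains \<phi> where "strict_mono \<phi>" "\<And>k. convergent (\<lambda>i. L (\<phi> i) k)"
proof -
  interpret subseqs "\<lambda>k s. convergent (\<lambda>i. L (s i) k)"
  proof
    fix k and s :: "nat \<Rightarrow> nat" assume "strict_mono s"
    have "bounded (range (\<lambda>i. L (s i) k))"
      using assms[of k] by (rule bounded_subset) auto
    then obtain l r where "strict_mono r" "((\<lambda>i. L (s i) k) \<circ> r) \<longlonglongrightarrow> l"
      using bounded_imp_convergent_subsequence by blast
    then show "\<exists>r. strict_mono r \<and> convergent (\<lambda>i. L ((s \<circ> r) i) k)"
      by (auto simp: convergent_def o_def)
  qed
  have "convergent (\<lambda>i. L (diagseq i) k)" for k
  proof -
    have "convergent (\<lambda>i. L ((diagseq \<circ> (+) (Suc k)) i) k)"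
    proof (rule diagseq_holds)
      fix r s n assume r: "strict_mono (r :: nat \<Rightarrow> nat)" and "convergent (\<lambda>i. L (s i) n)"
      then obtain l where "(\<lambda>i. L (s i) n) \<longlonglongrightarrow> l" by (auto simp: convergent_def)
      from LIMSEQ_subseq_LIMSEQ[OF this r] show "convergent (\<lambda>i. L ((s \<circ> r) i) n)"
        by (auto simp: convergent_def o_def)
    qed
    then obtain l where "(\<lambda>i. L (diagseq (i + Suc k)) k) \<longlonglongrightarrow> l"
      unfolding convergent_def o_def add.commute[of "Suc k"] by blast
    then have "(\<lambda>i. L (diagseq i) k) \<longlonglongrightarrow> l" by (rule LIMSEQ_offset)
    then show ?thesis by (auto simp: convergent_def)
  qed
  then show ?thesis by (rule that[OF subseq_diagseq])
qed

lemma nonneg_summable_if_pointwise_limit: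
  fixes L :: "nat \<Rightarrow> nat \<Rightarrow> real"
  assumes nonneg: "\<And>i k. 0 \<le> L i k" and bounded: "\<And>i N. (\<Sum>k\<le>N. L i k) \<le> C"
    and lim: "\<And>k. (\<lambda>i. L i k) \<longlonglongrightarrow> mu k"
  shows "\<And>k. 0 \<le> mu k" and "summable mu"
proof -
  show mu_nonneg: "0 \<le> mu k" for k
    using lim by (rule LIMSEQ_le_const) (auto simp: nonneg)
  have "(\<Sum>k\<le>N. mu k) \<le> C" for N
  proof -
    have "(\<lambda>i. \<Sum>k\<le>N. L i k) \<longlonglongrightarrow> (\<Sum>k\<le>N. mu k)" by (intro tendsto_sum lim)
    then show ?thesis by (rule LIMSEQ_le_const2) (auto simp: bounded)
  qed
  moreover have "sum mu {..<N} \<le> (\<Sum>k\<le>N. mu k)" for N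
    by (rule sum_mono2) (auto simp: mu_nonneg)
  ultimately have "sum mu {..<N} \<le> C" for N by (meson order_trans)
  then show "summable mu" by (intro summableI_nonneg_bounded mu_nonneg)
qed

lemma sum_scaleR_eq_sum_scaleR_convex_combination:
  fixes v :: "'b \<Rightarrow> 'a::real_vector"
  assumes "finite F" "F \<noteq> {}" "\<And>k. k \<in> F \<Longrightarrow> 0 \<le> lam k"
  obtains c where "\<And>k. k \<in> F \<Longrightarrow> 0 \<le> c k" "sum c F = 1"
    "(\<Sum>k\<in>F. lam k *\<^sub>R v k) = sum lam F *\<^sub>R (\<Sum>k\<in>F. c k *\<^sub>R v k)"
proof (cases "sum lam F = 0")
  case True
  then have "\<forall>k\<in>F. lam k = 0" using assms by (simp add: sum_nonneg_eq_0_iff)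
  moreover obtain k0 where "k0 \<in> F" using assms(2) by blast
  ultimately show ?thesis
    using assms(1) by (intro that[of "\<lambda>k. if k = k0 then 1 else 0"]) auto
next
  case False
  show ?thesis
  proof (rule that[of "\<lambda>k. lam k / sum lam F"])
    show "(\<Sum>k\<in>F. lam k *\<^sub>R v k) = sum lam F *\<^sub>R (\<Sum>k\<in>F. (lam k / sum lam F) *\<^sub>R v k)"
      using False by (simp add: scaleR_sum_right)
  qed (use False assms in \<open>auto simp: sum_divide_distrib[symmetric] sum_nonneg\<close>)
qed

lemma block_seq_conv_of_normalized_blocks:
  fixes x :: "nat \<Rightarrow> 'a::real_normed_vector" and R :: "nat \<Rightarrow> nat \<Rightarrow> real"
  assumes "strict_mono N" "\<And>j k. 0 \<le> R j k"
  obtains z where "block_seq_conv x z"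
    "\<And>j. (\<Sum>k\<in>{N j<..N (Suc j)}. R j k *\<^sub>R x k) = (\<Sum>k\<in>{N j<..N (Suc j)}. R j k) *\<^sub>R z j"
proof -
  define F where "F j = {N j<..N (Suc j)}" for j
  have F_nonempty: "N (Suc j) \<in> F j" for j using assms(1) by (simp add: F_def strict_mono_Suc_iff)
  have "\<exists>c. (\<forall>k\<in>F j. 0 \<le> c k) \<and> sum c (F j) = 1 \<and>
      (\<Sum>k\<in>F j. R j k *\<^sub>R x k) = sum (R j) (F j) *\<^sub>R (\<Sum>k\<in>F j. c k *\<^sub>R x k)" for j
  proof (rule sum_scaleR_eq_sum_scaleR_convex_combination[of "F j" "R j" x])
    show "finite (F j)" "F j \<noteq> {}" "\<And>k. 0 \<le> R j k" using F_nonempty[of j] assms(2)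
      by (auto simp: F_def)
  qed blast
  then obtain c where c: "\<And>j. (\<forall>k\<in>F j. 0 \<le> c j k) \<and> sum (c j) (F j) = 1 \<and>
      (\<Sum>k\<in>F j. R j k *\<^sub>R x k) = sum (R j) (F j) *\<^sub>R (\<Sum>k\<in>F j. c j k *\<^sub>R x k)"
    by metis
  define z where "z j = (\<Sum>k\<in>F j. c j k *\<^sub>R x k)" for j
  have "Max (F j) = N (Suc j)" for j using F_nonempty by (intro Max_eqI) (auto simp: F_def)
  moreover have "Min (F j) = Suc (N j)" for j
    using assms(1) by (intro Min_eqI) (auto simp: F_def strict_mono_Suc_iff Suc_le_eq)
  ultimately have Max_Min: "Max (F j) < Min (F (Suc j))" for j by simp
  have "block_seq_conv x z"
    unfolding block_seq_conv_def
  proof (intro exI[of _ F] exI[of _ c] allI conjI)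
    fix j
    show "finite (F j)" by (simp add: F_def)
    show "F j \<noteq> {}" using F_nonempty by blast
    show "\<forall>k\<in>F j. 0 \<le> c j k" "sum (c j) (F j) = 1" using c[of j] by blast+
    show "z j = (\<Sum>k\<in>F j. c j k *\<^sub>R x k)" by (simp add: z_def)
    show "Max (F j) < Min (F (Suc j))" by (rule Max_Min)
  qed
  then show ?thesis
  proof (rule that)
    fix j
    from c[of j] show "(\<Sum>k\<in>{N j<..N (Suc j)}. R j k *\<^sub>R x k)
        = (\<Sum>k\<in>{N j<..N (Suc j)}. R j k) *\<^sub>R z j"
      unfolding z_def F_def by blast
  qed
qed

lemma sum_atMost_eq_head_plus_block:
  fixes f :: "nat \<Rightarrow> 'a::comm_monoid_add"
  assumes "\<And>k. M < k \<Longrightarrow> f k = 0" "M \<le> b" "a \<le> b"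
  shows "(\<Sum>k\<le>M. f k) = (\<Sum>k\<le>a. f k) + (\<Sum>k\<in>{a<..b}. f k)"
proof -
  have split: "{..b} = {..a} \<union> {a<..b}" using assms(3) by auto
  have "(\<Sum>k\<le>M. f k) = (\<Sum>k\<le>b. f k)"
    using assms(1,2) by (intro sum.mono_neutral_left) auto
  also have "\<dots> = (\<Sum>k\<le>a. f k) + (\<Sum>k\<in>{a<..b}. f k)"
    unfolding split by (rule sum.union_disjoint) auto
  finally show ?thesis .
qed

lemma gliding_hump_subseq:
  fixes L :: "nat \<Rightarrow> nat \<Rightarrow> real" and M :: "nat \<Rightarrow> nat"
  assumes lim: "\<And>k. (\<lambda>i. L i k) \<longlonglongrightarrow> mu k"
  obtains N n :: "nat \<Rightarrow> nat" where "strict_mono N" "strict_mono n" "\<And>j. M (n j) \<le> N (Suc j)"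
    "(\<lambda>j. \<Sum>k\<le>N j. \<bar>L (n j) k - mu k\<bar>) \<longlonglongrightarrow> 0"
proof -
  have "\<exists>i\<ge>m. (\<Sum>k\<le>m. \<bar>L i k - mu k\<bar>) < 1 / (real m + 1)" for m
  proof -
    have "(\<lambda>i. \<Sum>k\<le>m. \<bar>L i k - mu k\<bar>) \<longlonglongrightarrow> (\<Sum>k\<le>m. \<bar>mu k - mu k\<bar>)"
      by (intro tendsto_intros lim)
    then have "eventually (\<lambda>i. (\<Sum>k\<le>m. \<bar>L i k - mu k\<bar>) < 1 / (real m + 1)) sequentially"
      by (rule order_tendstoD(2)) (simp_all add: divide_pos_pos)
    then obtain i0 where "\<And>i. i \<ge> i0 \<Longrightarrow> (\<Sum>k\<le>m. \<bar>L i k - mu k\<bar>) < 1 / (real m + 1)"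
      by (auto simp: eventually_sequentially)
    then show ?thesis by (intro exI[of _ "max i0 m"]) auto
  qed
  then obtain P where P_ge: "\<And>m. m \<le> P m"
    and P_close: "\<And>m. (\<Sum>k\<le>m. \<bar>L (P m) k - mu k\<bar>) < 1 / (real m + 1)"
    by metis
  \<comment> \<open>Block j + 1 starts beyond both the chosen row n j and its support.\<close>
  define N where "N = rec_nat 0 (\<lambda>_ a. a + P a + M (P a) + 1)"
  have N_Suc: "N (Suc j) = N j + P (N j) + M (P (N j)) + 1" for j by (simp add: N_def)
  define n where "n j = P (N j)" for j
  have "strict_mono N" unfolding strict_mono_Suc_iff by (simp add: N_Suc)
  moreover have "strict_mono n" unfolding strict_mono_Suc_iff
  proof
    fix j
    have "n j < N (Suc j)" by (simp add: n_def N_Suc)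
    also have "\<dots> \<le> n (Suc j)" by (simp add: n_def P_ge)
    finally show "n j < n (Suc j)" .
  qed
  moreover have "M (n j) \<le> N (Suc j)" for j by (simp add: n_def N_Suc)
  moreover have "(\<lambda>j. \<Sum>k\<le>N j. \<bar>L (n j) k - mu k\<bar>) \<longlonglongrightarrow> 0"
  proof (rule Lim_null_comparison[OF always_eventually LIMSEQ_inverse_real_of_nat], intro allI)
    fix j
    have "real j \<le> real (N j)" using seq_suble[OF \<open>strict_mono N\<close>, of j] by simp
    then have "1 / (real (N j) + 1) \<le> inverse (real (Suc j))" by (simp add: field_simps)
    moreover have "0 \<le> (\<Sum>k\<le>N j. \<bar>L (n j) k - mu k\<bar>)" by (simp add: sum_nonneg)
    ultimately show "norm (\<Sum>k\<le>N j. \<bar>L (n j) k - mu k\<bar>) \<le> inverse (real (Suc j))"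
      using P_close[of "N j"] by (simp add: n_def)
  qed
  ultimately show ?thesis by (rule that)
qed

lemma tendsto_sum_atMost_if_l1_close:
  fixes v :: "nat \<Rightarrow> 'a::real_normed_vector"
  assumes close: "(\<lambda>j. \<Sum>k\<le>N j. \<bar>R j k - mu k\<bar>) \<longlonglongrightarrow> 0"
    and N: "filterlim N at_top sequentially"
    and v: "\<And>k. norm (v k) \<le> B" and summable: "summable (\<lambda>k. mu k *\<^sub>R v k)"
  shows "(\<lambda>j. \<Sum>k\<le>N j. R j k *\<^sub>R v k) \<longlonglongrightarrow> (\<Sum>k. mu k *\<^sub>R v k)"
proof -
  have "norm ((\<Sum>k\<le>N j. R j k *\<^sub>R v k) - (\<Sum>k\<le>N j. mu k *\<^sub>R v k))
      \<le> B * (\<Sum>k\<le>N j. \<bar>R j k - mu k\<bar>)" for j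
  proof -
    have "norm ((\<Sum>k\<le>N j. R j k *\<^sub>R v k) - (\<Sum>k\<le>N j. mu k *\<^sub>R v k))
        \<le> (\<Sum>k\<le>N j. norm ((R j k - mu k) *\<^sub>R v k))"
      unfolding sum_subtractf[symmetric] scaleR_diff_left[symmetric] by (rule norm_sum)
    also have "\<dots> \<le> (\<Sum>k\<le>N j. \<bar>R j k - mu k\<bar> * B)"
      using v by (intro sum_mono) (simp add: mult_left_mono)
    finally show ?thesis by (simp add: sum_distrib_left mult.commute)
  qed
  then have "(\<lambda>j. (\<Sum>k\<le>N j. R j k *\<^sub>R v k) - (\<Sum>k\<le>N j. mu k *\<^sub>R v k)) \<longlonglongrightarrow> 0"
    by (intro Lim_null_comparison[OF always_eventually tendsto_mult_right_zero[OF close]]) auto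
  moreover have "(\<lambda>j. \<Sum>k\<le>N j. mu k *\<^sub>R v k) \<longlonglongrightarrow> (\<Sum>k. mu k *\<^sub>R v k)"
    using filterlim_compose[OF summable_LIMSEQ'[OF summable] N] by (simp add: o_def)
  ultimately show ?thesis by (rule Lim_transform[rotated])
qed

lemma block_seq_conv_norm_le:
  assumes "block_seq_conv x z" "\<And>k. norm (x k) \<le> B"
  shows "norm (z j) \<le> B"
proof -
  have "convex hull (range x) \<subseteq> cball 0 B"
    using assms(2) by (intro hull_minimal) auto
  then have "z j \<in> cball 0 B" using block_seq_conv_range_subset_convex_hull[OF assms(1)] by blast
  then show ?thesis by simp
qed

lemma summable_scaleR_if_bounded:
  fixes x :: "nat \<Rightarrow> 'a::banach"
  assumes "summable mu" "\<And>k. 0 \<le> mu k" "\<And>k. norm (x k) \<le> B"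
  shows "summable (\<lambda>k. mu k *\<^sub>R x k)"
proof (rule summable_comparison_test[OF _ summable_mult2[OF assms(1), of B]])
  show "\<exists>N. \<forall>k\<ge>N. norm (mu k *\<^sub>R x k) \<le> mu k * B"
    using assms(2,3) by (simp add: mult_left_mono)
qed

lemma block_seq_conv_asymptotic_if_heads_l1_close:
  fixes x :: "nat \<Rightarrow> 'a::banach" and R :: "nat \<Rightarrow> nat \<Rightarrow> real"
  assumes x_bound: "\<And>k. norm (x k) \<le> B"
    and nonneg: "\<And>j k. 0 \<le> R j k" and support: "\<And>j k. M j < k \<Longrightarrow> R j k = 0"
    and row_sum: "\<And>j. (\<Sum>k\<le>M j. R j k) = 1"
    and N: "strict_mono N" and M_le: "\<And>j. M j \<le> N (Suc j)"
    and close: "(\<lambda>j. \<Sum>k\<le>N j. \<bar>R j k - mu k\<bar>) \<longlonglongrightarrow> 0"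
    and mu_nonneg: "\<And>k. 0 \<le> mu k" and "summable mu"
  obtains z where "block_seq_conv x z"
    "(\<lambda>j. (\<Sum>k\<le>M j. R j k *\<^sub>R x k) - ((\<Sum>k. mu k *\<^sub>R x k) + (1 - (\<Sum>k. mu k)) *\<^sub>R z j))
      \<longlonglongrightarrow> 0"
proof -
  obtain z where z: "block_seq_conv x z" and z_eq:
    "\<And>j. (\<Sum>k\<in>{N j<..N (Suc j)}. R j k *\<^sub>R x k) = (\<Sum>k\<in>{N j<..N (Suc j)}. R j k) *\<^sub>R z j"
    using block_seq_conv_of_normalized_blocks[OF N, of R x] nonneg by blast
  define t where "t j = (\<Sum>k\<in>{N j<..N (Suc j)}. R j k)" for j
  define u where "u = (\<Sum>k. mu k *\<^sub>R x k)"
  define s where "s = (\<Sum>k. mu k)"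
  have N_le: "N j \<le> N (Suc j)" for j using N by (simp add: strict_mono_Suc_iff less_imp_le)
  have row_split:
    "(\<Sum>k\<le>M j. R j k *\<^sub>R x k) = (\<Sum>k\<le>N j. R j k *\<^sub>R x k) + t j *\<^sub>R z j" for j
    using sum_atMost_eq_head_plus_block[where f = "\<lambda>k. R j k *\<^sub>R x k", OF _ M_le[of j] N_le[of j]]
      support z_eq
    by (simp add: t_def)
  have t_eq: "t j = 1 - (\<Sum>k\<le>N j. R j k)" for j
    using sum_atMost_eq_head_plus_block[where f = "R j", OF _ M_le[of j] N_le[of j]] support row_sum
    by (simp add: t_def)
  have N_lim: "filterlim N at_top sequentially" using N by (rule filterlim_subseq)
  from close N_lim x_bound summable_scaleR_if_bounded[OF \<open>summable mu\<close> mu_nonneg x_bound]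
  have head_lim: "(\<lambda>j. \<Sum>k\<le>N j. R j k *\<^sub>R x k) \<longlonglongrightarrow> u"
    unfolding u_def by (rule tendsto_sum_atMost_if_l1_close)
  have "(\<lambda>j. \<Sum>k\<le>N j. R j k *\<^sub>R (1::real)) \<longlonglongrightarrow> (\<Sum>k. mu k *\<^sub>R 1)"
    using close N_lim _ by (rule tendsto_sum_atMost_if_l1_close[where B = 1])
      (use \<open>summable mu\<close> in simp_all)
  then have "t \<longlonglongrightarrow> 1 - s"
    unfolding t_eq s_def by (intro tendsto_diff tendsto_const) simp
  have "(\<lambda>j. (t j - (1 - s)) *\<^sub>R z j) \<longlonglongrightarrow> 0"
  proof (rule Lim_null_comparison[OF always_eventually])
    show "\<forall>j. norm ((t j - (1 - s)) *\<^sub>R z j) \<le> \<bar>t j - (1 - s)\<bar> * B"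
      using block_seq_conv_norm_le[OF z x_bound] by (simp add: mult_left_mono)
    show "(\<lambda>j. \<bar>t j - (1 - s)\<bar> * B) \<longlonglongrightarrow> 0"
      using \<open>t \<longlonglongrightarrow> 1 - s\<close> by (intro tendsto_mult_left_zero tendsto_rabs_zero) (simp add: LIM_zero)
  qed
  from tendsto_add[OF LIM_zero[OF head_lim] this]
  have "(\<lambda>j. (\<Sum>k\<le>M j. R j k *\<^sub>R x k) - (u + (1 - s) *\<^sub>R z j)) \<longlonglongrightarrow> 0"
    by (simp add: row_split algebra_simps)
  with z show ?thesis unfolding u_def s_def by (rule that)
qed

lemma convex_combination_rows_asymptotic_block_decomposition:
  fixes x :: "nat \<Rightarrow> 'a::banach" and L :: "nat \<Rightarrow> nat \<Rightarrow> real"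
  assumes x_bound: "\<And>k. norm (x k) \<le> B"
    and nonneg: "\<And>i k. 0 \<le> L i k" and support: "\<And>i k. M i < k \<Longrightarrow> L i k = 0"
    and row_sum: "\<And>i. (\<Sum>k\<le>M i. L i k) = 1" and lim: "\<And>k. (\<lambda>i. L i k) \<longlonglongrightarrow> mu k"
  obtains n z u \<tau> where "strict_mono n" "block_seq_conv x z"
    "(\<lambda>j. (\<Sum>k\<le>M (n j). L (n j) k *\<^sub>R x k) - (u + \<tau> *\<^sub>R z j)) \<longlonglongrightarrow> 0"
proof -
  have "(\<Sum>k\<le>K. L i k) \<le> 1" for i K
  proof -
    have "(\<Sum>k\<le>K. L i k) \<le> (\<Sum>k\<le>max K (M i). L i k)" by (rule sum_mono2) (auto simp: nonneg)
    also have "\<dots> = 1"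
      using sum_atMost_eq_head_plus_block[of "M i" "L i" "max K (M i)" "max K (M i)"]
        support row_sum
      by simp
    finally show ?thesis .
  qed
  from nonneg_summable_if_pointwise_limit[OF nonneg this lim]
  have mu_nonneg: "\<And>k. 0 \<le> mu k" and "summable mu" by blast+
  obtain N n where N: "strict_mono N" and n: "strict_mono n" and M_le: "\<And>j. M (n j) \<le> N (Suc j)"
    and close: "(\<lambda>j. \<Sum>k\<le>N j. \<bar>L (n j) k - mu k\<bar>) \<longlonglongrightarrow> 0"
    using gliding_hump_subseq[of L mu M, OF lim] by blast
  obtain z where "block_seq_conv x z"
    "(\<lambda>j. (\<Sum>k\<le>M (n j). L (n j) k *\<^sub>R x k) - ((\<Sum>k. mu k *\<^sub>R x k) + (1 - (\<Sum>k. mu k)) *\<^sub>R z j))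
      \<longlonglongrightarrow> 0"
    by (rule block_seq_conv_asymptotic_if_heads_l1_close[where R = "\<lambda>j. L (n j)"
          and M = "\<lambda>j. M (n j)", OF x_bound nonneg support row_sum N M_le close mu_nonneg
          \<open>summable mu\<close>])
  with n show ?thesis by (rule that)
qed

lemma convex_hull_seq_asymptotic_block_decomposition:
  fixes x w :: "nat \<Rightarrow> 'a::banach"
  assumes "bounded (range x)" and w: "\<And>n. w n \<in> convex hull (range x)"
  obtains \<psi> z u \<tau> where "strict_mono \<psi>" "block_seq_conv x z"
    "(\<lambda>j. w (\<psi> j) - (u + \<tau> *\<^sub>R z j)) \<longlonglongrightarrow> 0"
proof -
  obtain B where B: "\<And>k. norm (x k) \<le> B" using assms(1) by (auto simp: bounded_iff)
  have "\<forall>n. \<exists>lam M. (\<forall>k. 0 \<le> lam k) \<and> (\<forall>k>M. lam k = 0) \<and> (\<Sum>k\<le>M. lam k) = 1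
      \<and> w n = (\<Sum>k\<le>M. lam k *\<^sub>R x k)"
    using convex_hull_range_nat_explicit w by blast
  then obtain lam where "\<forall>n. \<exists>M. (\<forall>k. 0 \<le> lam n k) \<and> (\<forall>k>M. lam n k = 0)
      \<and> (\<Sum>k\<le>M. lam n k) = 1 \<and> w n = (\<Sum>k\<le>M. lam n k *\<^sub>R x k)"
    by (rule choice[THEN exE])
  then obtain M where "\<forall>n. (\<forall>k. 0 \<le> lam n k) \<and> (\<forall>k>M n. lam n k = 0)
      \<and> (\<Sum>k\<le>M n. lam n k) = 1 \<and> w n = (\<Sum>k\<le>M n. lam n k *\<^sub>R x k)"
    by (rule choice[THEN exE])
  then have lam_nonneg: "\<And>n k. 0 \<le> lam n k"
    and lam_support: "\<And>n k. M n < k \<Longrightarrow> lam n k = 0"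
    and lam_sum: "\<And>n. (\<Sum>k\<le>M n. lam n k) = 1" and w_eq: "\<And>n. w n = (\<Sum>k\<le>M n. lam n k *\<^sub>R x k)"
    by simp_all
  have "lam n k \<le> 1" for n k
  proof (cases "k \<le> M n")
    case True
    then show ?thesis using member_le_sum[of k "{..M n}" "lam n"] lam_nonneg lam_sum by simp
  next
    case False
    then show ?thesis using lam_support by simp
  qed
  then have "bounded (range (\<lambda>n. lam n k))" for k
    using lam_nonneg by (intro boundedI[where B = 1]) auto
  then obtain \<phi> where \<phi>: "strict_mono \<phi>" and "\<And>k. convergent (\<lambda>i. lam (\<phi> i) k)"
    using diagonal_subseq_pointwise_convergent[of lam] by blast
  then have lim: "(\<lambda>i. lam (\<phi> i) k) \<longlonglongrightarrow> lim (\<lambda>i. lam (\<phi> i) k)" for k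
    by (simp add: convergent_LIMSEQ_iff)
  obtain n z u \<tau> where "strict_mono n" "block_seq_conv x z"
    "(\<lambda>j. (\<Sum>k\<le>M (\<phi> (n j)). lam (\<phi> (n j)) k *\<^sub>R x k) - (u + \<tau> *\<^sub>R z j)) \<longlonglongrightarrow> 0"
    by (rule convex_combination_rows_asymptotic_block_decomposition
        [where L = "\<lambda>i. lam (\<phi> i)" and M = "\<lambda>i. M (\<phi> i)", OF B lam_nonneg lam_support lam_sum lim])
  then show ?thesis
    using \<phi> by (intro that[of "\<phi> \<circ> n" z u \<tau>]) (simp_all add: strict_mono_o w_eq)
qed

lemma banach_saks_set_convex_hull_if_block_seqs:
  fixes x :: "nat \<Rightarrow> 'a::banach"
  assumes "bounded (range x)" and blocks: "\<And>z. block_seq_conv x z \<Longrightarrow> banach_saks_set (range z)"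
  shows "banach_saks_set (convex hull (range x))"
  unfolding banach_saks_set_def
proof (intro allI impI)
  fix w :: "nat \<Rightarrow> 'a" assume "\<forall>n. w n \<in> convex hull (range x)"
  then obtain \<psi> z u \<tau> where \<psi>: "strict_mono \<psi>" and z: "block_seq_conv x z"
    and close: "(\<lambda>j. w (\<psi> j) - (u + \<tau> *\<^sub>R z j)) \<longlonglongrightarrow> 0"
    using convex_hull_seq_asymptotic_block_decomposition[OF assms(1)] by blast
  have "\<forall>n. z n \<in> range z" by simp
  with blocks[OF z] obtain r where r: "strict_mono r" "convergent (cesaro_mean (z \<circ> r))"
    unfolding banach_saks_set_def by blast
  have "(\<lambda>j. (w \<circ> (\<psi> \<circ> r)) j - (u + \<tau> *\<^sub>R (z \<circ> r) j)) \<longlonglongrightarrow> 0"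
    using LIMSEQ_subseq_LIMSEQ[OF close r(1)] by (simp add: o_def)
  from convergent_cesaro_mean_perturb[OF this convergent_cesaro_mean_affine[OF r(2)]]
  show "\<exists>r. strict_mono r \<and> convergent (cesaro_mean (w \<circ> r))"
    using strict_mono_o[OF \<psi> r(1)] by blast
qed

theorem lemma2p9:
  fixes x y :: "nat \<Rightarrow> 'a::banach"
  assumes "bounded (range x)" and "bounded (range y)"
  shows "(summable (\<lambda>n. norm (x n - y n)) \<longrightarrow>
            (banach_saks_set (range x) \<longleftrightarrow> banach_saks_set (range y)))
         \<and> (banach_saks_set (convex hull (range x)) \<longleftrightarrow>
            (\<forall>z. block_seq_conv x z \<longrightarrow> banach_saks_set (range z)))"
proof (intro conjI impI)
  \<comment> \<open>Part (a) only uses that x n - y n tends to 0.\<close>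
  assume "summable (\<lambda>n. norm (x n - y n))"
  then have "(\<lambda>n. x n - y n) \<longlonglongrightarrow> 0"
    using summable_LIMSEQ_zero tendsto_norm_zero_iff by blast
  moreover from tendsto_minus[OF this] have "(\<lambda>n. y n - x n) \<longlonglongrightarrow> 0" by simp
  ultimately show "banach_saks_set (range x) \<longleftrightarrow> banach_saks_set (range y)"
    using banach_saks_set_range_if_asymptotic by blast
next
  show "banach_saks_set (convex hull (range x)) \<longleftrightarrow>
      (\<forall>z. block_seq_conv x z \<longrightarrow> banach_saks_set (range z))"
  proof
    assume "banach_saks_set (convex hull (range x))"
    then show "\<forall>z. block_seq_conv x z \<longrightarrow> banach_saks_set (range z)"
      using banach_saks_set_subset block_seq_conv_range_subset_convex_hull by blast
  qed (use banach_saks_set_convex_hull_if_block_seqs[OF assms(1)] in blast)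
qed

end
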